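(* Let ${\sf APE}$ be the non-symmetric suboperad of ${\sf T}\mathbb{N}$ generated by $01$. Then the elements of ${\sf APE}$ of arity $n$ are exactly the words $x$ of length $n$ over $\mathbb{N}$ satisfying $x_1=0$ and $1\le x_{i+1}\le x_i+1$ for all $1\le i\le n-1$. Moreover, the elements of ${\sf APE}$ of arity $n$ are in bijection with the rooted plane trees with $n$ nodes. Finally, ${\sf APE}$ is isomorphic (as a non-symmetric operad) to the free non-symmetric operad on one generator of arity two.
   Context: Let $\mathbb{N}$ be the additive monoid of nonnegative integers. ${\sf T}\mathbb{N}=\biguplus_{n\ge1}\mathbb{N}^n$, elements of arity $n$ being words $x=(x_1,\dots,x_n)$ of length $n$ over $\mathbb{N}$ (written without separators, e.g. $01=(0,1)$), with partial compositions $x\circ_i y:=(x_1,\dots,x_{i-1},x_i+y_1,\dots,x_i+y_m,x_{i+1},\dots,x_n)$ for $x$ of arity $n$, $y$ of arity $m$, $1\le i\le n$; it is a non-symmetric set-operad with unit $(0)$. The non-symmetric suboperad generated by a set $S$ is the smallest subset containing $S$ and the unit $(0)$ and closed under all partial compositions $\circ_i$. *)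

theory Defs
  imports Main
begin

text \<open>Elements of T N are nonempty words over nat, represented as nat lists.
  Positions are 1-indexed in the paper; list indexing (!) is 0-indexed.\<close>

definition pcomp :: "nat list \<Rightarrow> nat \<Rightarrow> nat list \<Rightarrow> nat list" where
  "pcomp x i y = take (i - 1) x @ map (\<lambda>a. x ! (i - 1) + a) y @ drop i x"

inductive APE :: "nat list \<Rightarrow> bool" where
  APE_unit: "APE [0]"
| APE_gen: "APE [0, 1]"
| APE_comp: "APE x \<Longrightarrow> APE y \<Longrightarrow> 1 \<le> i \<Longrightarrow> i \<le> length x \<Longrightarrow> APE (pcomp x i y)"

datatype ptree = PNode "ptree list"

fun nodes :: "ptree \<Rightarrow> nat" where
  "nodes (PNode ts) = 1 + sum_list (map nodes ts)"

text \<open>The free non-symmetric operad on one binary generator: binary trees,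
  arity = number of leaves, unit = Leaf, generator = Bin Leaf Leaf,
  partial composition = grafting onto the i-th leaf (1-indexed).\<close>
datatype btree = Leaf | Bin btree btree

fun leaves :: "btree \<Rightarrow> nat" where
  "leaves Leaf = 1"
| "leaves (Bin l r) = leaves l + leaves r"

fun graft :: "btree \<Rightarrow> nat \<Rightarrow> btree \<Rightarrow> btree" where
  "graft Leaf i t = (if i = 1 then t else Leaf)"
| "graft (Bin l r) i t =
     (if i \<le> leaves l then Bin (graft l i t) r else Bin l (graft r (i - leaves l) t))"

end

theory Submission
  imports Defs
begin

text \<open>Encode a binary tree t by the word \<phi> t with \<phi> Leaf = 0 and
  \<phi> (Bin l r) = \<phi> l \<cdot> (\<phi> r + 1), i.e. \<phi> (Bin l r) = (01 \<circ>2 \<phi> r) \<circ>1 \<phi> l.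
  Since \<phi> turns grafting into partial composition, the image of \<phi> is a suboperad
  containing 01, and it is contained in every such suboperad; so it is APE.
  Every \<phi> t satisfies the step condition, and conversely a step word x k with
  1 \<le> k \<le> last x + 1 is obtained from a tree for x by walking k - 1 steps down the
  right spine and grafting a new rightmost leaf there; so the image of \<phi> is the set
  of step words. \<phi> is injective because in \<phi> l \<cdot> (\<phi> r + 1) the split point is the
  last occurrence of the letter 1. Finally binary trees with n leaves correspond to
  plane trees with n nodes by the rotation correspondence.\<close>

definition step_word :: "nat list \<Rightarrow> bool" where
  "step_word x \<longleftrightarrow> x \<noteq> [] \<and> x ! 0 = 0 \<and>
     (\<forall>i. i + 1 < length x \<longrightarrow> 1 \<le> x ! (i + 1) \<and> x ! (i + 1) \<le> x ! i + 1)"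

fun word_of_btree :: "btree \<Rightarrow> nat list" where
  "word_of_btree Leaf = [0]"
| "word_of_btree (Bin l r) = word_of_btree l @ map Suc (word_of_btree r)"

lemma length_word_of_btree: "length (word_of_btree t) = leaves t"
  by (induction t) auto

lemma leaves_pos: "0 < leaves t"
  by (induction t) auto

lemma word_of_btree_not_Nil: "word_of_btree t \<noteq> []"
  by (induction t) auto

lemma pcomp_append:
  assumes "1 \<le> j" "j \<le> length x'"
  shows "pcomp (x @ x') (length x + j) y = x @ pcomp x' j y"
proof -
  obtain j' where "j = Suc j'" using assms(1) by (cases j) auto
  then show ?thesis using assms by (simp add: pcomp_def nth_append)
qed

lemma pcomp_map_Suc:
  "1 \<le> j \<Longrightarrow> j \<le> length x \<Longrightarrow> pcomp (map Suc x) j y = map Suc (pcomp x j y)"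
  by (simp add: pcomp_def take_map drop_map)

lemma word_of_btree_graft:
  "1 \<le> i \<Longrightarrow> i \<le> leaves s \<Longrightarrow>
   word_of_btree (graft s i t) = pcomp (word_of_btree s) i (word_of_btree t)"
proof (induction s arbitrary: i)
  case Leaf
  then show ?case by (simp add: pcomp_def)
next
  case (Bin l r)
  show ?case
  proof (cases "i \<le> leaves l")
    case True
    then have "i - 1 < length (word_of_btree l)" "i \<le> length (word_of_btree l)"
      using Bin.prems leaves_pos[of l] by (simp_all add: length_word_of_btree)
    then show ?thesis using True Bin by (simp add: pcomp_def nth_append)
  next
    case False
    define j where "j = i - leaves l"
    have j: "1 \<le> j" "j \<le> leaves r" "i = length (word_of_btree l) + j"
      using False Bin.prems by (auto simp: j_def length_word_of_btree)
    have "pcomp (word_of_btree (Bin l r)) i (word_of_btree t)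
        = word_of_btree l @ pcomp (map Suc (word_of_btree r)) j (word_of_btree t)"
      using pcomp_append[of j "map Suc (word_of_btree r)" "word_of_btree l"] j
      by (simp add: length_word_of_btree)
    then show ?thesis
      using False Bin.IH(2)[OF j(1,2)] j by (simp add: pcomp_map_Suc length_word_of_btree)
  qed
qed

lemma APE_word_of_btree: "APE (word_of_btree t)"
proof (induction t)
  case Leaf
  show ?case by (simp add: APE_unit)
next
  case (Bin l r)
  have "APE (pcomp [0, 1] 2 (word_of_btree r))"
    by (rule APE_comp[OF APE_gen Bin.IH(2)]) auto
  then have "APE (pcomp (pcomp [0, 1] 2 (word_of_btree r)) 1 (word_of_btree l))"
    by (rule APE_comp[OF _ Bin.IH(1)]) (auto simp: pcomp_def)
  then show ?case by (simp add: pcomp_def)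
qed

lemma APE_imp_word_of_btree: "APE x \<Longrightarrow> \<exists>t. word_of_btree t = x"
proof (induction rule: APE.induct)
  case APE_unit
  show ?case using word_of_btree.simps(1) by blast
next
  case APE_gen
  show ?case by (rule exI[of _ "Bin Leaf Leaf"]) simp
next
  case (APE_comp x y i)
  then obtain s t where "x = word_of_btree s" "y = word_of_btree t" by metis
  then have "word_of_btree (graft s i t) = pcomp x i y"
    using APE_comp.hyps(3,4) word_of_btree_graft[of i s t] by (simp add: length_word_of_btree)
  then show ?case by blast
qed

lemma APE_iff_in_range_word_of_btree: "APE x \<longleftrightarrow> x \<in> range word_of_btree"
  using APE_word_of_btree APE_imp_word_of_btree by blast

lemma step_word_singleton [simp]: "step_word [k] \<longleftrightarrow> k = 0"
  by (simp add: step_word_def)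

lemma step_word_snoc:
  assumes "x \<noteq> []"
  shows "step_word (x @ [k]) \<longleftrightarrow> step_word x \<and> 1 \<le> k \<and> k \<le> last x + 1"
proof -
  have last: "last x = x ! (length x - 1)" and len: "length x - 1 + 1 = length x"
    using assms by (auto simp: last_conv_nth)
  have "(\<forall>i. i + 1 < length (x @ [k]) \<longrightarrow>
          1 \<le> (x @ [k]) ! (i + 1) \<and> (x @ [k]) ! (i + 1) \<le> (x @ [k]) ! i + 1)
      \<longleftrightarrow> (\<forall>i. i + 1 < length x \<longrightarrow> 1 \<le> x ! (i + 1) \<and> x ! (i + 1) \<le> x ! i + 1)
          \<and> 1 \<le> k \<and> k \<le> last x + 1"
    (is "(\<forall>i. ?P i) \<longleftrightarrow> (\<forall>i. ?Q i) \<and> ?R")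
  proof
    assume all: "\<forall>i. ?P i"
    have "?Q i" for i using all[rule_format, of i] by (auto simp: nth_append)
    moreover have ?R using all[rule_format, of "length x - 1"] assms last len
      by (simp add: nth_append)
    ultimately show "(\<forall>i. ?Q i) \<and> ?R" by blast
  next
    assume QR: "(\<forall>i. ?Q i) \<and> ?R"
    show "\<forall>i. ?P i"
    proof (intro allI impI)
      fix i assume "i + 1 < length (x @ [k])"
      then consider "i + 1 < length x" | "i = length x - 1" by fastforce
      then show "1 \<le> (x @ [k]) ! (i + 1) \<and> (x @ [k]) ! (i + 1) \<le> (x @ [k]) ! i + 1"
        by cases (use QR last assms in \<open>auto simp: nth_append\<close>)
    qed
  qed
  then show ?thesis using assms by (simp add: step_word_def nth_append)
qed

lemma step_word_append_map_Suc:
  assumes "step_word x"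
  shows "step_word y \<Longrightarrow> step_word (x @ map Suc y)"
proof (induction y rule: rev_induct)
  case Nil
  then show ?case by (simp add: step_word_def)
next
  case (snoc k y)
  have "x \<noteq> []" using assms by (simp add: step_word_def)
  show ?case
  proof (cases "y = []")
    case True
    then show ?thesis using snoc.prems assms \<open>x \<noteq> []\<close> by (simp add: step_word_snoc)
  next
    case False
    then have "step_word y" "1 \<le> k" "k \<le> last y + 1"
      using snoc.prems by (simp_all add: step_word_snoc)
    then show ?thesis
      using snoc.IH False \<open>x \<noteq> []\<close> by (simp add: step_word_snoc last_map flip: append_assoc)
  qed
qed

lemma step_word_word_of_btree: "step_word (word_of_btree t)"
  by (induction t) (simp_all add: step_word_append_map_Suc)

lemma word_of_btree_snoc:
  "1 \<le> k \<Longrightarrow> k \<le> last (word_of_btree t) + 1 \<Longrightarrow>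
   \<exists>t'. word_of_btree t' = word_of_btree t @ [k]"
proof (induction t arbitrary: k)
  case Leaf
  then show ?case by (intro exI[of _ "Bin Leaf Leaf"]) simp
next
  case (Bin l r)
  show ?case
  proof (cases "k = 1")
    case True
    then show ?thesis by (intro exI[of _ "Bin (Bin l r) Leaf"]) simp
  next
    case False
    have "last (word_of_btree (Bin l r)) = Suc (last (word_of_btree r))"
      using word_of_btree_not_Nil[of r] by (simp add: last_map)
    then have "1 \<le> k - 1" "k - 1 \<le> last (word_of_btree r) + 1"
      using False Bin.prems by auto
    then obtain r' where "word_of_btree r' = word_of_btree r @ [k - 1]"
      using Bin.IH(2) by blast
    then have "word_of_btree (Bin l r') = word_of_btree (Bin l r) @ [k]"
      using False Bin.prems by simp
    then show ?thesis by blast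
  qed
qed

lemma step_word_imp_word_of_btree: "step_word x \<Longrightarrow> \<exists>t. word_of_btree t = x"
proof (induction x rule: rev_induct)
  case Nil
  then show ?case by (simp add: step_word_def)
next
  case (snoc k x)
  show ?case
  proof (cases "x = []")
    case True
    then show ?thesis using snoc.prems by (intro exI[of _ Leaf]) simp
  next
    case False
    then obtain t where "word_of_btree t = x" "1 \<le> k" "k \<le> last x + 1"
      using snoc by (auto simp: step_word_snoc)
    then show ?thesis using word_of_btree_snoc by blast
  qed
qed

lemma range_word_of_btree: "range word_of_btree = {x. step_word x}"
  using step_word_word_of_btree step_word_imp_word_of_btree by blast

lemma APE_iff_step_word: "APE x \<longleftrightarrow> step_word x"
  using APE_iff_in_range_word_of_btree range_word_of_btree by blast

lemma append_Cons_eq_last_occurrence: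
  assumes "xs @ a # ys = xs' @ a # ys'" "a \<notin> set ys" "a \<notin> set ys'"
  shows "xs = xs' \<and> ys = ys'"
  using assms by (induction xs arbitrary: xs') (auto simp: Cons_eq_append_conv)

lemma step_word_eq_Cons:
  assumes "step_word x"
  shows "x = 0 # tl x" "0 \<notin> set (tl x)"
proof -
  show "x = 0 # tl x" using assms by (cases x) (auto simp: step_word_def)
  show "0 \<notin> set (tl x)"
  proof
    assume "0 \<in> set (tl x)"
    then obtain i where "i < length (tl x)" "tl x ! i = 0" by (auto simp: in_set_conv_nth)
    moreover from this(1) have "1 \<le> x ! (i + 1)" using assms by (simp add: step_word_def)
    ultimately show False by (simp add: nth_tl)
  qed
qed

lemma word_of_btree_Bin_split:
  "word_of_btree (Bin l r) = word_of_btree l @ 1 # map Suc (tl (word_of_btree r))"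
  "1 \<notin> set (map Suc (tl (word_of_btree r)))"
proof -
  note r = step_word_eq_Cons[OF step_word_word_of_btree[of r]]
  have "map Suc (word_of_btree r) = 1 # map Suc (tl (word_of_btree r))"
    using arg_cong[OF r(1), of "map Suc"] by simp
  then show "word_of_btree (Bin l r) = word_of_btree l @ 1 # map Suc (tl (word_of_btree r))"
    by simp
  show "1 \<notin> set (map Suc (tl (word_of_btree r)))" using r(2) by auto
qed

lemma inj_word_of_btree: "inj word_of_btree"
proof (rule injI)
  fix s t show "word_of_btree s = word_of_btree t \<Longrightarrow> s = t"
  proof (induction s arbitrary: t)
    case Leaf
    then show ?case
      by (cases t) (auto simp: Cons_eq_append_conv word_of_btree_not_Nil)
  next
    case (Bin l r)
    then obtain l' r' where t: "t = Bin l' r'"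
      using length_word_of_btree[of "Bin l r"] leaves_pos[of l] leaves_pos[of r]
      by (cases t) auto
    have "word_of_btree l @ 1 # map Suc (tl (word_of_btree r))
        = word_of_btree l' @ 1 # map Suc (tl (word_of_btree r'))"
      using Bin.prems unfolding t word_of_btree_Bin_split(1) .
    then have "word_of_btree l = word_of_btree l'
        \<and> map Suc (tl (word_of_btree r)) = map Suc (tl (word_of_btree r'))"
      using word_of_btree_Bin_split(2) by (intro append_Cons_eq_last_occurrence)
    then have "word_of_btree l = word_of_btree l'" "tl (word_of_btree r) = tl (word_of_btree r')"
      by (simp_all add: inj_map_eq_map)
    then have "word_of_btree l = word_of_btree l'" "word_of_btree r = word_of_btree r'"
      using step_word_eq_Cons(1)[OF step_word_word_of_btree] by metis+
    then show ?case using Bin.IH t by simp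
  qed
qed

lemma bij_betw_word_of_btree: "bij_betw word_of_btree UNIV {x. APE x}"
  using inj_word_of_btree APE_iff_in_range_word_of_btree by (auto simp: bij_betw_def)

lemma bij_betw_word_of_btree_leaves:
  "bij_betw word_of_btree {t. leaves t = n} {x. APE x \<and> length x = n}"
  using bij_betw_word_of_btree
  by (auto simp: bij_betw_def inj_on_def APE_iff_in_range_word_of_btree length_word_of_btree)

fun forest_of_btree :: "btree \<Rightarrow> ptree list" where
  "forest_of_btree Leaf = []"
| "forest_of_btree (Bin l r) = PNode (forest_of_btree l) # forest_of_btree r"

fun btree_of_forest :: "ptree list \<Rightarrow> btree" where
  "btree_of_forest [] = Leaf"
| "btree_of_forest (PNode ts # us) = Bin (btree_of_forest ts) (btree_of_forest us)"

lemma forest_of_btree_of_forest: "forest_of_btree (btree_of_forest ts) = ts"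
  by (induction ts rule: btree_of_forest.induct) auto

lemma btree_of_forest_of_btree: "btree_of_forest (forest_of_btree t) = t"
  by (induction t) auto

lemma leaves_eq_nodes_forest: "leaves t = 1 + sum_list (map nodes (forest_of_btree t))"
  by (induction t) auto

lemma bij_betw_rotation:
  "bij_betw (\<lambda>t. PNode (forest_of_btree t)) {t. leaves t = n} {p. nodes p = n}"
proof (rule bij_betw_byWitness[where f' = "\<lambda>p. case p of PNode ts \<Rightarrow> btree_of_forest ts"])
  show "\<forall>p\<in>{p. nodes p = n}. PNode (forest_of_btree (case p of PNode ts \<Rightarrow> btree_of_forest ts)) = p"
    by (auto simp: forest_of_btree_of_forest split: ptree.split)
  show "(\<lambda>p. case p of PNode ts \<Rightarrow> btree_of_forest ts) ` {p. nodes p = n} \<subseteq> {t. leaves t = n}"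
    using leaves_eq_nodes_forest by (auto simp: forest_of_btree_of_forest split: ptree.split)
qed (auto simp: btree_of_forest_of_btree leaves_eq_nodes_forest)

theorem mainTheorem3:
  shows "(\<forall>x. APE x \<longleftrightarrow>
            (x \<noteq> [] \<and> x ! 0 = 0 \<and>
             (\<forall>i. i + 1 < length x \<longrightarrow> 1 \<le> x ! (i + 1) \<and> x ! (i + 1) \<le> x ! i + 1)))
      \<and> (\<forall>n\<ge>1. \<exists>f. bij_betw f {x. APE x \<and> length x = n} {t. nodes t = n})
      \<and> (\<exists>\<phi>. bij_betw \<phi> (UNIV :: btree set) {x. APE x}
            \<and> \<phi> Leaf = [0]
            \<and> (\<forall>t. length (\<phi> t) = leaves t)
            \<and> (\<forall>s i t. 1 \<le> i \<and> i \<le> leaves s \<longrightarrow> \<phi> (graft s i t) = pcomp (\<phi> s) i (\<phi> t)))"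
proof (intro conjI allI impI)
  fix x
  show "APE x \<longleftrightarrow> (x \<noteq> [] \<and> x ! 0 = 0 \<and>
          (\<forall>i. i + 1 < length x \<longrightarrow> 1 \<le> x ! (i + 1) \<and> x ! (i + 1) \<le> x ! i + 1))"
    using APE_iff_step_word unfolding step_word_def .
next
  fix n :: nat
  show "\<exists>f. bij_betw f {x. APE x \<and> length x = n} {t. nodes t = n}"
    using bij_betw_trans[OF bij_betw_inv_into[OF bij_betw_word_of_btree_leaves] bij_betw_rotation]
    by blast
next
  show "\<exists>\<phi>. bij_betw \<phi> UNIV {x. APE x} \<and> \<phi> Leaf = [0] \<and> (\<forall>t. length (\<phi> t) = leaves t)
      \<and> (\<forall>s i t. 1 \<le> i \<and> i \<le> leaves s \<longrightarrow> \<phi> (graft s i t) = pcomp (\<phi> s) i (\<phi> t))"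
    using bij_betw_word_of_btree length_word_of_btree word_of_btree_graft by auto
qed

end
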